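(* Let $N,K,d$ be positive integers, let $\bm{r}\in\mathbb{R}^d$, let $i_w\in\{1,\dots,d\}$, let $\mathcal{H}$ be a finite nonempty scenario set, and for each $k\in\{1,\dots,K\}$ and $h\in\mathcal{H}$ let $\bm{M^{k,h}}\in\mathbb{R}^{d\times d}$. Let $\mathcal{Y}=\{\bm{y}\in\{0,1\}^{K\times d}:\sum_{k=1}^K y_{k,i}=1,\ i=1,\dots,d\}$. For $\bm{y}\in\mathcal{Y}$ and $h\in\mathcal{H}$ define vectors $\bm{u^h_n}\in\mathbb{R}^d$ by $\bm{u^h_0}=\bm{r}$ and $u^h_{n,j}=\sum_{k=1}^K\sum_{i=1}^d u^h_{n-1,i}M^{k,h}_{ij}y_{k,i}$ for $n=1,\dots,N$, $j=1,\dots,d$, and set $\ell_h(\bm{y})=u^h_{N,i_w}$. Let $\alpha\in(0,1]$ and let $\mathcal{H}^1,\dots,\mathcal{H}^P$ be a partition of $\mathcal{H}$ into $P$ subsets of equal cardinality with $\alpha|\mathcal{H}^p|\in\mathbb{Z}_+$ for all $p$. Let $\hat z_{\mathcal{H}}=\max_{\bm{y}\in\mathcal{Y}}s_\alpha\big([\ell_h(\bm{y})]_{h\in\mathcal{H}}\big)$ and for each $p$ let $\bm{y^{(p)}}\in\arg\max_{\bm{y}\in\mathcal{Y}}s_\alpha\big([\ell_h(\bm{y})]_{h\in\mathcal{H}^p}\big)$. Then $$\max_{p=1,\dots,P}s_\alpha\big([\ell_h(\bm{y^{(p)}})]_{h\in\mathcal{H}}\big)\ \le\ \hat z_{\mathcal{H}}\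 \le\ \frac1P\sum_{p=1}^P s_\alpha\big([\ell_h(\bm{y^{(p)}})]_{h\in\mathcal{H}^p}\big).$$
   Context: For a finite index set $\mathcal{G}$, a vector $\bm{\upsilon}\in\mathbb{R}^{|\mathcal{G}|}$ and $\alpha\in(0,1]$ with $\alpha|\mathcal{G}|\in\mathbb{Z}_+$, $s_\alpha(\bm{\upsilon})$ denotes the average of the $\alpha|\mathcal{G}|$ smallest entries of $\bm{\upsilon}$. In the paper $\hat z_{\mathcal{H}}$ is defined as the optimal value of a mixed-integer linear program that is an exact reformulation of the maximization problem written above; $i_w$ is the index of the target ("wild type") state and $y_{k,i}=1$ means antibiotic $k$ is applied whenever the state is $i$. *)

theory Defs
  imports "HOL-Analysis.Analysis"
begin

definition s_alpha :: "'h set \<Rightarrow> real \<Rightarrow> ('h \<Rightarrow> real) \<Rightarrow> real" where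
  "s_alpha G \<alpha> v =
     (let m = nat \<lfloor>\<alpha> * real (card G)\<rfloor>;
          xs = (SOME xs. set xs = G \<and> distinct xs)
      in sum_list (take m (sort (map v xs))) / real m)"

definition policies :: "nat \<Rightarrow> nat \<Rightarrow> (nat \<Rightarrow> nat \<Rightarrow> real) set" where
  "policies K d = {y. (\<forall>k i. y k i \<in> {0,1}) \<and>
                      (\<forall>k i. (k \<notin> {1..K} \<or> i \<notin> {1..d}) \<longrightarrow> y k i = 0) \<and>
                      (\<forall>i\<in>{1..d}. (\<Sum>k=1..K. y k i) = 1)}"

text \<open>u^h_n as a vector indexed by 1..d; M k h i j is entry (i,j) of M^{k,h}.\<close>
fun uvec :: "nat \<Rightarrow> nat \<Rightarrow> (nat \<Rightarrow> real) \<Rightarrow> (nat \<Rightarrow> 'h \<Rightarrow> nat \<Rightarrow> nat \<Rightarrow> real)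
               \<Rightarrow> (nat \<Rightarrow> nat \<Rightarrow> real) \<Rightarrow> 'h \<Rightarrow> nat \<Rightarrow> nat \<Rightarrow> real" where
  "uvec K d r M y h 0 j = r j"
| "uvec K d r M y h (Suc n) j =
     (\<Sum>k=1..K. \<Sum>i=1..d. uvec K d r M y h n i * M k h i j * y k i)"

definition ell :: "nat \<Rightarrow> nat \<Rightarrow> nat \<Rightarrow> (nat \<Rightarrow> real) \<Rightarrow> nat
                    \<Rightarrow> (nat \<Rightarrow> 'h \<Rightarrow> nat \<Rightarrow> nat \<Rightarrow> real) \<Rightarrow> (nat \<Rightarrow> nat \<Rightarrow> real) \<Rightarrow> 'h \<Rightarrow> real" where
  "ell N K d r iw M y h = uvec K d r M y h N iw"

end

theory Submission imports Defs "HOL-Library.Multiset" begin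

text \<open>The tail average \<open>s\<^sub>\<alpha>(v)\<close> over \<open>G\<close> is the least mean of \<open>v\<close> over the
  \<open>\<alpha>|G|\<close>-element subsets of \<open>G\<close>. Choosing a minimising subset in every part \<open>H\<^sup>p\<close> and
  taking their union gives a competitor of the right size in \<open>H\<close>, so for every policy the value
  on \<open>H\<close> is at most the average of the part-wise values, and each of these is at most the value
  of the part-wise optimiser \<open>y\<^sup>p\<close>. The lower bound holds because every \<open>y\<^sup>p\<close> is feasible.
  Nothing about the dynamics defining \<open>\<ell>\<^sub>h\<close> is used.\<close>

lemma sum_list_take_sorted_le_sum_mset:
  fixes ys :: "'a :: {linorder, ordered_comm_monoid_add} list"
  assumes "sorted ys" "A \<subseteq># mset ys"
  shows "sum_list (take (size A) ys) \<le> sum_mset A"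
  using assms
proof (induction ys arbitrary: A)
  case Nil
  then show ?case by simp
next
  case (Cons y ys)
  show ?case
  proof (cases "y \<in># A")
    case True
    then obtain A' where A: "A = add_mset y A'" by (metis mset_add)
    then have "A' \<subseteq># mset ys" using Cons.prems(2) by simp
    then show ?thesis using Cons A by (simp add: add_left_mono)
  next
    case False
    then have sub: "A \<subseteq># mset ys"
      using Cons.prems(2) by (metis Diff_eq_empty_iff_mset minus_add_mset_if_not_in_lhs mset.simps(2))
    show ?thesis
    proof (cases "A = {#}")
      case False
      then obtain a A' where A: "A = add_mset a A'" by (metis multiset_cases)
      have "y \<le> a" using Cons.prems(1) sub A by (auto dest: mset_subset_eqD)
      moreover have "A' \<subseteq># mset ys"
        using A subset_mset.order_trans[OF _ sub] by simp
      ultimately show ?thesis using Cons A by (simp add: add_mono)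
    qed simp
  qed
qed

lemma nat_floor_mult_card_le:
  assumes "\<alpha> \<le> 1"
  shows "nat \<lfloor>\<alpha> * real (card G)\<rfloor> \<le> card G"
proof -
  have "\<alpha> * real (card G) \<le> real (card G)"
    using mult_right_mono[OF assms, of "real (card G)"] by simp
  then show ?thesis
    by (simp add: nat_le_iff floor_le_iff)
qed

lemma s_alpha_eq_Min_sum:
  fixes v :: "'h \<Rightarrow> real"
  assumes "finite G" "\<alpha> \<le> 1"
  defines "m \<equiv> nat \<lfloor>\<alpha> * real (card G)\<rfloor>"
  shows "s_alpha G \<alpha> v = (MIN S\<in>{S. S \<subseteq> G \<and> card S = m}. sum v S) / real m"
proof -
  define xs where "xs = (SOME xs. set xs = G \<and> distinct xs)"
  have xs: "set xs = G" "distinct xs"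
    unfolding xs_def by (metis (mono_tags, lifting) someI_ex finite_distinct_list[OF assms(1)])+
  define zs where "zs = sort_key v xs"
  have sort_eq: "sort (map v xs) = map v zs"
    unfolding zs_def by (intro properties_for_sort) (auto simp: mset_map)
  have "m \<le> length zs"
    using nat_floor_mult_card_le[OF assms(2), of G] xs
    by (simp add: m_def zs_def distinct_card[symmetric])
  define S\<^sub>0 where "S\<^sub>0 = set (take m zs)"
  have dist: "distinct (take m zs)" using xs(2) by (simp add: zs_def)
  have S\<^sub>0: "S\<^sub>0 \<subseteq> G" "card S\<^sub>0 = m"
    using set_take_subset[of m zs] xs \<open>m \<le> length zs\<close> dist
    by (auto simp: S\<^sub>0_def zs_def distinct_card)
  have s_alpha_eq: "s_alpha G \<alpha> v = sum v S\<^sub>0 / real m"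
    using dist unfolding s_alpha_def Let_def xs_def[symmetric] m_def[symmetric] sort_eq S\<^sub>0_def
    by (simp add: take_map sum_list_distinct_conv_sum_set)
  have minimal: "sum v S\<^sub>0 \<le> sum v S" if "S \<subseteq> G" "card S = m" for S
  proof -
    have "image_mset v (mset_set S) \<subseteq># image_mset v (mset_set G)"
      by (intro image_mset_subseteq_mono subset_imp_msubset_mset_set assms(1) that(1))
    also have "image_mset v (mset_set G) = mset (sort (map v xs))"
      using xs mset_set_set by fastforce
    finally have "sum_list (take m (sort (map v xs))) \<le> sum_mset (image_mset v (mset_set S))"
      using sum_list_take_sorted_le_sum_mset[of "sort (map v xs)"] that(2) by fastforce
    then show ?thesis
      using dist by (simp add: sort_eq take_map sum_list_distinct_conv_sum_set S\<^sub>0_def sum_unfold_sum_mset)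
  qed
  have "(MIN S\<in>{S. S \<subseteq> G \<and> card S = m}. sum v S) = sum v S\<^sub>0"
    using S\<^sub>0 minimal assms(1) by (intro Min_eqI) (auto intro: finite_subset[of _ "Pow G"])
  then show ?thesis using s_alpha_eq by simp
qed

lemma s_alpha_le_average:
  fixes v :: "'h \<Rightarrow> real"
  assumes "finite G" "\<alpha> \<le> 1" "S \<subseteq> G" "card S = nat \<lfloor>\<alpha> * real (card G)\<rfloor>"
  shows "s_alpha G \<alpha> v \<le> sum v S / real (card S)"
proof -
  have "finite {T. T \<subseteq> G \<and> card T = card S}"
    using assms(1) by (auto intro: finite_subset[of _ "Pow G"])
  then show ?thesis
    unfolding s_alpha_eq_Min_sum[OF assms(1,2)] assms(4)[symmetric]
    using assms(3) by (intro divide_right_mono Min_le) auto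
qed

lemma s_alpha_attained:
  fixes v :: "'h \<Rightarrow> real"
  assumes "finite G" "\<alpha> \<le> 1"
  obtains S where "S \<subseteq> G" "card S = nat \<lfloor>\<alpha> * real (card G)\<rfloor>"
    "s_alpha G \<alpha> v = sum v S / real (card S)"
proof -
  let ?m = "nat \<lfloor>\<alpha> * real (card G)\<rfloor>"
  let ?Subsets = "{S. S \<subseteq> G \<and> card S = ?m}"
  obtain S\<^sub>0 where "S\<^sub>0 \<subseteq> G" "card S\<^sub>0 = ?m"
    by (rule obtain_subset_with_card_n[OF nat_floor_mult_card_le[OF assms(2), of G]])
  then have "?Subsets \<noteq> {}"
    by blast
  moreover have "finite ?Subsets"
    using assms(1) by (auto intro: finite_subset[of _ "Pow G"])
  ultimately have "(MIN S\<in>?Subsets. sum v S) \<in> sum v ` ?Subsets"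
    by simp
  then obtain S where "S \<subseteq> G" "card S = ?m" "(MIN S\<in>?Subsets. sum v S) = sum v S"
    by auto
  then show ?thesis
    using that s_alpha_eq_Min_sum[OF assms, of v] by simp
qed

lemma s_alpha_Union_le_average:
  fixes v :: "'h \<Rightarrow> real" and Hp :: "'i \<Rightarrow> 'h set"
  assumes "finite I" "disjoint_family_on Hp I"
    and finite_parts: "\<And>p. p \<in> I \<Longrightarrow> finite (Hp p)"
    and card_parts: "\<And>p. p \<in> I \<Longrightarrow> card (Hp p) = c"
    and "\<alpha> \<le> 1" "\<alpha> * real c = real m"
  shows "s_alpha (\<Union>p\<in>I. Hp p) \<alpha> v \<le> (\<Sum>p\<in>I. s_alpha (Hp p) \<alpha> v) / real (card I)"
proof -
  have "\<forall>p\<in>I. \<exists>S. S \<subseteq> Hp p \<and> card S = m \<and> s_alpha (Hp p) \<alpha> v = sum v S / real m"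
  proof
    fix p assume p: "p \<in> I"
    have "nat \<lfloor>\<alpha> * real (card (Hp p))\<rfloor> = m"
      using card_parts[OF p] assms(6) by simp
    then show "\<exists>S. S \<subseteq> Hp p \<and> card S = m \<and> s_alpha (Hp p) \<alpha> v = sum v S / real m"
      using s_alpha_attained[OF finite_parts[OF p] assms(5)] by metis
  qed
  then obtain S where S: "\<forall>p\<in>I. S p \<subseteq> Hp p \<and> card (S p) = m \<and> s_alpha (Hp p) \<alpha> v = sum v (S p) / real m"
    by (metis bchoice)
  have finite_S: "\<forall>p\<in>I. finite (S p)"
    using S finite_parts finite_subset by blast
  have disjoint_S: "disjoint_family_on S I"
    using assms(2) S unfolding disjoint_family_on_def by blast
  have "card (\<Union>p\<in>I. Hp p) = card I * c"
    using card_UN_disjoint'[OF assms(2) finite_parts assms(1)] card_parts by simp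
  then have "\<alpha> * real (card (\<Union>p\<in>I. Hp p)) = real (card I * m)"
    using assms(6) by (metis mult.left_commute of_nat_mult)
  then have floor_Union: "nat \<lfloor>\<alpha> * real (card (\<Union>p\<in>I. Hp p))\<rfloor> = card I * m"
    by (simp only: floor_of_nat nat_int)
  have "card (\<Union>p\<in>I. S p) = card I * m"
    using card_UN_disjoint'[OF disjoint_S _ assms(1)] finite_S S by simp
  moreover have "finite (\<Union>p\<in>I. Hp p)"
    using assms(1) finite_parts by blast
  ultimately have "s_alpha (\<Union>p\<in>I. Hp p) \<alpha> v \<le> sum v (\<Union>p\<in>I. S p) / real (card I * m)"
    using s_alpha_le_average[OF _ assms(5), of _ "\<Union>p\<in>I. S p"] S floor_Union by fastforce
  also have "\<dots> = (\<Sum>p\<in>I. sum v (S p) / real m) / real (card I)"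
    unfolding sum.UNION_disjoint_family[OF assms(1) finite_S disjoint_S]
    by (simp add: sum_divide_distrib[symmetric] field_simps)
  also have "\<dots> = (\<Sum>p\<in>I. s_alpha (Hp p) \<alpha> v) / real (card I)"
    using S by simp
  finally show ?thesis .
qed

lemma finite_policies: "finite (policies K d)"
proof -
  let ?Rows = "{g :: nat \<Rightarrow> real. \<forall>i. (i \<in> {1..d} \<longrightarrow> g i \<in> {0, 1}) \<and> (i \<notin> {1..d} \<longrightarrow> g i = 0)}"
  have "finite ?Rows"
    by (rule finite_set_of_finite_funs) auto
  then have "finite {y. \<forall>k. (k \<in> {1..K} \<longrightarrow> y k \<in> ?Rows) \<and> (k \<notin> {1..K} \<longrightarrow> y k = (\<lambda>_. 0))}"
    by (intro finite_set_of_finite_funs) auto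
  moreover have "policies K d \<subseteq> {y. \<forall>k. (k \<in> {1..K} \<longrightarrow> y k \<in> ?Rows) \<and> (k \<notin> {1..K} \<longrightarrow> y k = (\<lambda>_. 0))}"
    unfolding policies_def by auto
  ultimately show ?thesis
    by (rule finite_subset[rotated])
qed

lemma Max_le_average_of_part_optima:
  fixes F :: "'y \<Rightarrow> real" and g :: "'i \<Rightarrow> 'y \<Rightarrow> real"
  assumes "finite Y" "Y \<noteq> {}"
    and F_le: "\<And>y. y \<in> Y \<Longrightarrow> F y \<le> (\<Sum>p\<in>I. g p y) / real (card I)"
    and optimal: "\<And>p y. p \<in> I \<Longrightarrow> y \<in> Y \<Longrightarrow> g p y \<le> g p (yp p)"
  shows "(MAX y\<in>Y. F y) \<le> (\<Sum>p\<in>I. g p (yp p)) / real (card I)"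
proof (rule Max.boundedI)
  show "finite (F ` Y)" "F ` Y \<noteq> {}"
    using assms(1,2) by simp_all
next
  fix x assume "x \<in> F ` Y"
  then obtain y where y: "y \<in> Y" "x = F y" by blast
  have "(\<Sum>p\<in>I. g p y) \<le> (\<Sum>p\<in>I. g p (yp p))"
    using optimal y(1) by (intro sum_mono) blast
  then have "(\<Sum>p\<in>I. g p y) / real (card I) \<le> (\<Sum>p\<in>I. g p (yp p)) / real (card I)"
    by (rule divide_right_mono) simp
  then show "x \<le> (\<Sum>p\<in>I. g p (yp p)) / real (card I)"
    using F_le[OF y(1)] y(2) by linarith
qed

theorem proposition4:
  fixes N K d P :: nat and r :: "nat \<Rightarrow> real" and iw :: nat
    and H :: "'h set" and M :: "nat \<Rightarrow> 'h \<Rightarrow> nat \<Rightarrow> nat \<Rightarrow> real"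
    and \<alpha> :: real and Hp :: "nat \<Rightarrow> 'h set"
    and yp :: "nat \<Rightarrow> nat \<Rightarrow> nat \<Rightarrow> real"
  assumes "N > 0" "K > 0" "d > 0"
    and "iw \<in> {1..d}"
    and "finite H" "H \<noteq> {}"
    and "0 < \<alpha>" "\<alpha> \<le> 1"
    and "P > 0"
    and "\<forall>p\<in>{1..P}. Hp p \<subseteq> H"
    and "(\<Union>p\<in>{1..P}. Hp p) = H"
    and "\<forall>p\<in>{1..P}. \<forall>q\<in>{1..P}. p \<noteq> q \<longrightarrow> Hp p \<inter> Hp q = {}"
    and "\<forall>p\<in>{1..P}. \<forall>q\<in>{1..P}. card (Hp p) = card (Hp q)"
    and "\<forall>p\<in>{1..P}. \<alpha> * real (card (Hp p)) \<in> \<nat> \<and> \<alpha> * real (card (Hp p)) > 0"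
    and "\<forall>p\<in>{1..P}. yp p \<in> policies K d \<and>
           (\<forall>y\<in>policies K d. s_alpha (Hp p) \<alpha> (ell N K d r iw M y)
                               \<le> s_alpha (Hp p) \<alpha> (ell N K d r iw M (yp p)))"
  shows "(MAX p\<in>{1..P}. s_alpha H \<alpha> (ell N K d r iw M (yp p)))
           \<le> (MAX y\<in>policies K d. s_alpha H \<alpha> (ell N K d r iw M y))
       \<and> (MAX y\<in>policies K d. s_alpha H \<alpha> (ell N K d r iw M y))
           \<le> (\<Sum>p=1..P. s_alpha (Hp p) \<alpha> (ell N K d r iw M (yp p))) / real P"
proof -
  let ?z = "\<lambda>G y. s_alpha G \<alpha> (ell N K d r iw M y)"
  define c where "c = card (Hp 1)"
  have one: "1 \<in> {1..P}"
    using assms(9) by simp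
  have card_parts: "\<And>p. p \<in> {1..P} \<Longrightarrow> card (Hp p) = c"
    using assms(13) one unfolding c_def by blast
  obtain m :: nat where m: "\<alpha> * real c = real m"
    using assms(14) one unfolding c_def by (metis Nats_cases)
  have disjoint: "disjoint_family_on Hp {1..P}"
    using assms(12) by (auto simp: disjoint_family_on_def)
  have finite_parts: "\<And>p. p \<in> {1..P} \<Longrightarrow> finite (Hp p)"
    using assms(5,10) finite_subset by blast
  have split: "?z H y \<le> (\<Sum>p\<in>{1..P}. ?z (Hp p) y) / real (card {1..P})" for y
    using s_alpha_Union_le_average[OF finite_atLeastAtMost disjoint finite_parts card_parts assms(8) m]
    unfolding assms(11) .
  have "(MAX p\<in>{1..P}. ?z H (yp p)) \<le> (MAX y\<in>policies K d. ?z H y)"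
    using one assms(15) finite_policies by (intro Max_mono) auto
  moreover have "(MAX y\<in>policies K d. ?z H y)
      \<le> (\<Sum>p\<in>{1..P}. ?z (Hp p) (yp p)) / real (card {1..P})"
    by (rule Max_le_average_of_part_optima[OF finite_policies, where F = "?z H" and g = "\<lambda>p. ?z (Hp p)"])
      (use one assms(15) split in auto)
  ultimately show ?thesis
    by simp
qed

end
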